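(* Let $k$ be a field of characteristic zero, $A_1=k[t,\partial]$ the first Weyl algebra ($\partial t-t\partial=1$), $Q_1$ its quotient division ring, and let $I$ be a non-zero right ideal of $A_1$. Then there exists an element $f\in I$, unique up to multiplication by an element of $k^*$, such that the set of elements of $I$ of minimal $t$-degree (together with $0$) is exactly $f\,k[\partial]$. Likewise, there exists an element $e^*\in I^*$, unique up to multiplication by an element of $k^*$, such that the set of elements of $I^*$ of minimal $t$-degree (together with $0$) is exactly $k[\partial]\,e^*$.
   Context: $I^*$ denotes the dual of $I$ as a left $A_1$-module, identified with $\{u\in Q_1: uI\subseteq A_1\}$. The $t$-degree $\deg_t$ is the degree in $t$ coming from the inclusion $A_1\subset k(\partial)[t]$, extended to $Q_1$ (the quotient division ring of $k(\partial)[t]$) by $\deg_t(ab^{-1})=\deg_t a-\deg_t b$. *)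

theory Defs
  imports Main
begin

text \<open>K is a central subfield of characteristic zero, and t, d (for the derivation
  symbol) satisfy d t - t d = 1.  Since the Weyl algebra is simple in
  characteristic zero, the K-subalgebra generated by t and d is a copy of A_1,
  and its division closure is a copy of the quotient division ring Q_1.\<close>

inductive_set ring_cl :: "'a::ring_1 set \<Rightarrow> 'a set" for S where
  rc_base: "x \<in> S \<Longrightarrow> x \<in> ring_cl S"
| rc_one: "1 \<in> ring_cl S"
| rc_add: "x \<in> ring_cl S \<Longrightarrow> y \<in> ring_cl S \<Longrightarrow> x + y \<in> ring_cl S"
| rc_neg: "x \<in> ring_cl S \<Longrightarrow> - x \<in> ring_cl S"
| rc_mult: "x \<in> ring_cl S \<Longrightarrow> y \<in> ring_cl S \<Longrightarrow> x * y \<in> ring_cl S"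

inductive_set div_cl :: "'a::division_ring set \<Rightarrow> 'a set" for S where
  dc_base: "x \<in> S \<Longrightarrow> x \<in> div_cl S"
| dc_one: "1 \<in> div_cl S"
| dc_add: "x \<in> div_cl S \<Longrightarrow> y \<in> div_cl S \<Longrightarrow> x + y \<in> div_cl S"
| dc_neg: "x \<in> div_cl S \<Longrightarrow> - x \<in> div_cl S"
| dc_mult: "x \<in> div_cl S \<Longrightarrow> y \<in> div_cl S \<Longrightarrow> x * y \<in> div_cl S"
| dc_inv: "x \<in> div_cl S \<Longrightarrow> inverse x \<in> div_cl S"

definition central_subfield :: "'a::division_ring set \<Rightarrow> bool" where
  "central_subfield K \<longleftrightarrow> 0 \<in> K \<and> 1 \<in> K \<and>
     (\<forall>x\<in>K. \<forall>y\<in>K. x + y \<in> K \<and> x * y \<in> K) \<and>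
     (\<forall>x\<in>K. - x \<in> K \<and> inverse x \<in> K) \<and>
     (\<forall>c\<in>K. \<forall>x. c * x = x * c)"

definition Weyl :: "'a::division_ring set \<Rightarrow> 'a \<Rightarrow> 'a \<Rightarrow> 'a set" where
  "Weyl K t d = ring_cl (K \<union> {t, d})"

definition Kpoly_d :: "'a::division_ring set \<Rightarrow> 'a \<Rightarrow> 'a set" where
  "Kpoly_d K d = ring_cl (K \<union> {d})"

definition Kfrac_d :: "'a::division_ring set \<Rightarrow> 'a \<Rightarrow> 'a set" where
  "Kfrac_d K d = div_cl (K \<union> {d})"

definition Kfrac_d_t :: "'a::division_ring set \<Rightarrow> 'a \<Rightarrow> 'a \<Rightarrow> 'a set" where
  "Kfrac_d_t K t d = ring_cl (Kfrac_d K d \<union> {t})"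

definition Quot1 :: "'a::division_ring set \<Rightarrow> 'a \<Rightarrow> 'a \<Rightarrow> 'a set" where
  "Quot1 K t d = div_cl (Weyl K t d)"

definition deg_t_poly :: "'a::division_ring set \<Rightarrow> 'a \<Rightarrow> 'a \<Rightarrow> 'a \<Rightarrow> nat" where
  "deg_t_poly K t d a = (LEAST n. \<exists>c. (\<forall>i\<le>n. c i \<in> Kfrac_d K d) \<and>
                                     a = (\<Sum>i\<le>n. c i * t ^ i))"

definition deg_t :: "'a::division_ring set \<Rightarrow> 'a \<Rightarrow> 'a \<Rightarrow> 'a \<Rightarrow> int" where
  "deg_t K t d q = (THE m. \<exists>a b. a \<in> Kfrac_d_t K t d \<and> b \<in> Kfrac_d_t K t d \<and> b \<noteq> 0 \<and>
       q = a * inverse b \<and> m = int (deg_t_poly K t d a) - int (deg_t_poly K t d b))"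

definition right_ideal :: "'a::ring_1 set \<Rightarrow> 'a set \<Rightarrow> bool" where
  "right_ideal A I \<longleftrightarrow> I \<subseteq> A \<and> 0 \<in> I \<and> (\<forall>x\<in>I. \<forall>y\<in>I. x + y \<in> I) \<and>
     (\<forall>x\<in>I. \<forall>a\<in>A. x * a \<in> I)"

definition dual_ideal :: "'a::division_ring set \<Rightarrow> 'a \<Rightarrow> 'a \<Rightarrow> 'a set \<Rightarrow> 'a set" where
  "dual_ideal K t d I = {u \<in> Quot1 K t d. \<forall>x\<in>I. u * x \<in> Weyl K t d}"

definition min_deg_part :: "'a::division_ring set \<Rightarrow> 'a \<Rightarrow> 'a \<Rightarrow> 'a set \<Rightarrow> 'a set" where
  "min_deg_part K t d S = {x \<in> S. x \<noteq> 0 \<and> (\<forall>y\<in>S. y \<noteq> 0 \<longrightarrow> deg_t K t d x \<le> deg_t K t d y)} \<union> {0}"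

end

theory Submission
  imports Defs
begin

text \<open>The Weyl algebra sits in \<open>k(\<partial>)[t]\<close>, a skew polynomial ring over the field \<open>k(\<partial>)\<close>
  (\<open>t a = a t + [t, a]\<close>), where leading coefficients multiply as in a commutative polynomial
  ring. This gives a degree, right division with remainder and the Ore condition, so \<open>deg\<^sub>t\<close>
  is well defined on \<open>Q\<^sub>1\<close>; division in \<open>\<partial>\<close> makes \<open>k[\<partial>]\<close> a principal ideal domain.
  For a nonzero right ideal \<open>I\<close>, the leading coefficients of the elements of minimal degree
  \<open>m\<close> form, with \<open>0\<close>, a nonzero ideal of \<open>k[\<partial>]\<close>. An \<open>f \<in> I\<close> of degree \<open>m\<close> whose
  leading coefficient generates it works: any \<open>x \<in> I\<close> of degree \<open>m\<close> differs from some \<open>f p\<close>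
  by an element of \<open>I\<close> of smaller degree, hence equals \<open>f p\<close>. Two such generators differ by
  units of \<open>k[\<partial>]\<close>, i.e. by \<open>k\<^sup>*\<close>. The same argument applies to \<open>I\<^sup>*\<close> with \<open>k[\<partial>]\<close> acting on
  the left, degrees being measured through \<open>u \<mapsto> u f\<^sub>0\<close> for a fixed \<open>0 \<noteq> f\<^sub>0 \<in> I\<close>.\<close>

lemma ring_cl_zero: "0 \<in> ring_cl S"
  by (metis rc_add rc_neg rc_one add.right_inverse)

lemma ring_cl_diff: "x \<in> ring_cl S \<Longrightarrow> y \<in> ring_cl S \<Longrightarrow> x - y \<in> ring_cl S"
  by (metis rc_add rc_neg diff_conv_add_uminus)

lemma ring_cl_power: "x \<in> ring_cl S \<Longrightarrow> x ^ n \<in> ring_cl S"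
  by (induction n) (auto intro: ring_cl.intros)

lemma ring_cl_mono:
  assumes "S \<subseteq> T" shows "ring_cl S \<subseteq> ring_cl T"
proof
  fix x assume "x \<in> ring_cl S"
  then show "x \<in> ring_cl T"
    by (induction x rule: ring_cl.induct) (use assms in \<open>auto intro: ring_cl.intros\<close>)
qed

lemma ring_cl_subset_div_cl: "ring_cl S \<subseteq> div_cl S"
proof
  fix x assume "x \<in> ring_cl S"
  then show "x \<in> div_cl S" by (induction x rule: ring_cl.induct) (auto intro: div_cl.intros)
qed

lemma div_cl_zero: "0 \<in> div_cl S"
  using ring_cl_zero ring_cl_subset_div_cl by blast

lemma div_cl_diff: "x \<in> div_cl S \<Longrightarrow> y \<in> div_cl S \<Longrightarrow> x - y \<in> div_cl S"
  by (metis dc_add dc_neg diff_conv_add_uminus)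

lemma div_cl_commute:
  assumes "\<And>s. s \<in> S \<Longrightarrow> s * z = z * (s::'a::division_ring)" and "x \<in> div_cl S"
  shows "x * z = z * x"
  using assms(2)
proof (induction x rule: div_cl.induct)
  case (dc_mult x y) then show ?case by (metis mult.assoc)
next
  case (dc_inv x)
  show ?case
  proof (cases "x = 0")
    case False
    have "inverse x * z = inverse x * (z * x) * inverse x" using False
      by (simp add: mult.assoc)
    also have "\<dots> = inverse x * (x * z) * inverse x" using dc_inv by simp
    also have "\<dots> = z * inverse x" using False by (simp add: mult.assoc[symmetric])
    finally show ?thesis .
  qed simp
qed (auto simp: assms(1) distrib_left distrib_right)

lemma div_cl_commutative:
  assumes "\<And>s s'. s \<in> S \<Longrightarrow> s' \<in> S \<Longrightarrow> s * s' = s' * (s::'a::division_ring)"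
    and "x \<in> div_cl S" "y \<in> div_cl S"
  shows "x * y = y * x"
  using assms div_cl_commute[of S y x] div_cl_commute[of S _ y] by metis

lemma commutator_mult:
  "t * (x * y) - x * y * t = (t * x - x * t) * y + x * (t * y - y * t)" for t x y :: "'a::ring"
  by (simp add: algebra_simps)

lemma ring_cl_commutator_closed:
  assumes "\<And>s. s \<in> S \<Longrightarrow> t * s - s * t \<in> ring_cl S" and "x \<in> ring_cl S"
  shows "t * x - x * t \<in> ring_cl S"
  using assms(2)
proof (induction x rule: ring_cl.induct)
  case (rc_add x y)
  have "t * (x + y) - (x + y) * t = (t * x - x * t) + (t * y - y * t)" by (simp add: algebra_simps)
  then show ?case using rc_add ring_cl.rc_add by metis
next
  case (rc_neg x)
  have "t * (- x) - (- x) * t = - (t * x - x * t)" by (simp add: algebra_simps)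
  then show ?case using rc_neg ring_cl.rc_neg by metis
next
  case (rc_mult x y)
  then show ?case by (metis commutator_mult ring_cl.rc_add ring_cl.rc_mult)
qed (simp_all add: assms(1) ring_cl_zero)

lemma div_cl_commutator_closed:
  assumes "\<And>s. s \<in> S \<Longrightarrow> t * s - s * t \<in> div_cl S" and "x \<in> div_cl S"
  shows "t * x - x * t \<in> div_cl (S::'a::division_ring set)"
  using assms(2)
proof (induction x rule: div_cl.induct)
  case (dc_add x y)
  have "t * (x + y) - (x + y) * t = (t * x - x * t) + (t * y - y * t)" by (simp add: algebra_simps)
  then show ?case using dc_add div_cl.dc_add by metis
next
  case (dc_neg x)
  have "t * (- x) - (- x) * t = - (t * x - x * t)" by (simp add: algebra_simps)
  then show ?case using dc_neg div_cl.dc_neg by metis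
next
  case (dc_mult x y)
  then show ?case by (metis commutator_mult div_cl.dc_add div_cl.dc_mult)
next
  case (dc_inv x)
  show ?case
  proof (cases "x = 0")
    case False
    have "inverse x * (t * x - x * t) * inverse x
        = inverse x * t * (x * inverse x) - (inverse x * x) * t * inverse x"
      by (simp add: left_diff_distrib right_diff_distrib mult.assoc)
    also have "\<dots> = inverse x * t - t * inverse x" using False by simp
    finally have "t * inverse x - inverse x * t = - (inverse x * (t * x - x * t) * inverse x)"
      by simp
    then show ?thesis using dc_inv div_cl.dc_inv div_cl.dc_mult div_cl.dc_neg by metis
  qed (simp add: div_cl_zero)
qed (simp_all add: assms(1) div_cl_zero)

definition poly_rep :: "'a::ring_1 set \<Rightarrow> 'a \<Rightarrow> 'a \<Rightarrow> (nat \<Rightarrow> 'a) \<Rightarrow> nat \<Rightarrow> bool" where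
  "poly_rep C y a c N \<longleftrightarrow> (\<forall>i. c i \<in> C) \<and> (\<forall>i>N. c i = 0) \<and> a = (\<Sum>i\<le>N. c i * y ^ i)"

definition lead_rep :: "'a::ring_1 set \<Rightarrow> 'a \<Rightarrow> 'a \<Rightarrow> (nat \<Rightarrow> 'a) \<Rightarrow> nat \<Rightarrow> bool" where
  "lead_rep C y a c n \<longleftrightarrow> poly_rep C y a c n \<and> c n \<noteq> 0"

definition poly_deg :: "'a::ring_1 set \<Rightarrow> 'a \<Rightarrow> 'a \<Rightarrow> nat" where
  "poly_deg C y a = (LEAST n. \<exists>c. (\<forall>i\<le>n. c i \<in> C) \<and> a = (\<Sum>i\<le>n. c i * y ^ i))"

lemma poly_rep_mono:
  assumes "poly_rep C y a c N" "N \<le> N'" shows "poly_rep C y a c N'"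
proof -
  have "(\<Sum>i\<le>N'. c i * y ^ i) = (\<Sum>i\<le>N. c i * y ^ i)"
    using assms unfolding poly_rep_def by (intro sum.mono_neutral_right) auto
  then show ?thesis using assms unfolding poly_rep_def by auto
qed

lemma poly_rep_coeffs_mono: "C \<subseteq> C' \<Longrightarrow> poly_rep C y a c N \<Longrightarrow> poly_rep C' y a c N"
  unfolding poly_rep_def by auto

text \<open>Every element of the ring generated by \<open>C\<close> and \<open>y\<close> is a left combination
  \<open>\<Sum> c\<^sub>i y\<^sup>i\<close> with \<open>c\<^sub>i \<in> C\<close>, since \<open>y a = a y + (y a - a y)\<close> moves \<open>y\<close> past coefficients.
  The auxiliary element \<open>z\<close> makes this representation unique: \<open>x \<mapsto> x z - z x\<close> maps
  \<open>\<Sum> c\<^sub>i y\<^sup>i\<close> to \<open>\<Sum> i c\<^sub>i y\<^sup>i\<^sup>-\<^sup>1\<close>, which in characteristic zero loses only the constant term.\<close>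

locale skew_poly =
  fixes C :: "'a::ring_1_no_zero_divisors set" and y z :: 'a
  assumes zero_mem: "0 \<in> C" and one_mem: "1 \<in> C"
    and add_mem: "a \<in> C \<Longrightarrow> b \<in> C \<Longrightarrow> a + b \<in> C"
    and uminus_mem: "a \<in> C \<Longrightarrow> - a \<in> C"
    and mult_mem: "a \<in> C \<Longrightarrow> b \<in> C \<Longrightarrow> a * b \<in> C"
    and commutator_mem: "a \<in> C \<Longrightarrow> y * a - a * y \<in> C"
    and commute_z: "a \<in> C \<Longrightarrow> a * z = z * a"
    and commutator_yz: "y * z - z * y = 1"
    and of_nat_neq_0: "\<And>n. n > 0 \<Longrightarrow> (of_nat n :: 'a) \<noteq> 0"
begin

abbreviation poly_ring :: "'a set" where "poly_ring \<equiv> ring_cl (C \<union> {y})"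

lemma commutator_power: "y ^ Suc i * z - z * y ^ Suc i = of_nat (Suc i) * y ^ i"
proof (induction i)
  case (Suc i)
  have "y ^ Suc (Suc i) * z - z * y ^ Suc (Suc i)
        = y * (y ^ Suc i * z - z * y ^ Suc i) + (y * z - z * y) * y ^ Suc i"
    by (simp add: algebra_simps)
  also have "\<dots> = y * (of_nat (Suc i) * y ^ i) + y ^ Suc i"
    using Suc commutator_yz by simp
  also have "y * (of_nat (Suc i) * y ^ i) = of_nat (Suc i) * y ^ Suc i"
    by (metis mult.assoc mult_of_nat_commute power_Suc)
  finally show ?case by (simp add: distrib_right)
qed (use commutator_yz in simp)

lemma coeffs_eq_0_if_sum_eq_0:
  "(\<And>i. i \<le> n \<Longrightarrow> c i * z = z * c i) \<Longrightarrow> (\<Sum>i\<le>n. c i * y ^ i) = 0 \<Longrightarrow> i \<le> n \<Longrightarrow> c i = 0"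
proof (induction n arbitrary: c i)
  case (Suc n)
  let ?X = "\<Sum>i\<le>Suc n. c i * y ^ i"
  have "c i * y ^ i * z - z * (c i * y ^ i) = c i * (y ^ i * z - z * y ^ i)" if "i \<le> Suc n" for i
  proof -
    have "z * (c i * y ^ i) = c i * (z * y ^ i)" using Suc.prems(1)[OF that] by (metis mult.assoc)
    then show ?thesis by (simp add: right_diff_distrib mult.assoc)
  qed
  then have "?X * z - z * ?X = (\<Sum>i\<le>Suc n. c i * (y ^ i * z - z * y ^ i))"
    unfolding sum_distrib_right sum_distrib_left sum_subtractf[symmetric] by simp
  also have "\<dots> = (\<Sum>j\<le>n. c (Suc j) * (y ^ Suc j * z - z * y ^ Suc j))"
    by (subst sum.atMost_Suc_shift) simp
  also have "\<dots> = (\<Sum>j\<le>n. (c (Suc j) * of_nat (Suc j)) * y ^ j)"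
    by (simp only: commutator_power mult.assoc)
  finally have "(\<Sum>j\<le>n. (c (Suc j) * of_nat (Suc j)) * y ^ j) = 0"
    using Suc.prems(2) by simp
  moreover have "c (Suc j) * of_nat (Suc j) * z = z * (c (Suc j) * of_nat (Suc j))" if "j \<le> n" for j
    using Suc.prems(1)[of "Suc j"] that by (metis Suc_le_mono mult.assoc mult_of_nat_commute)
  ultimately have "c (Suc j) * of_nat (Suc j) = 0" if "j \<le> n" for j
    using Suc.IH[of "\<lambda>j. c (Suc j) * of_nat (Suc j)"] that by blast
  then have high: "c (Suc j) = 0" if "j \<le> n" for j
    using that of_nat_neq_0[of "Suc j"] mult_eq_0_iff[of "c (Suc j)"] by blast
  have "?X = c 0" by (subst sum.atMost_Suc_shift) (simp add: high)
  then have "c 0 = 0" using Suc.prems(2) by simp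
  then show ?case using high Suc.prems(3) by (cases i) auto
qed simp

lemma poly_rep_unique:
  assumes "poly_rep C y a c N" "poly_rep C y a c' N'" shows "c = c'"
proof
  fix i
  let ?M = "max N N'"
  have reps: "poly_rep C y a c ?M" "poly_rep C y a c' ?M"
    using assms by (auto intro: poly_rep_mono)
  then have "(\<Sum>i\<le>?M. (c i - c' i) * y ^ i) = 0"
    unfolding poly_rep_def by (simp add: left_diff_distrib sum_subtractf)
  moreover have "(c i - c' i) * z = z * (c i - c' i)" for i
    using reps unfolding poly_rep_def by (simp add: left_diff_distrib right_diff_distrib commute_z)
  ultimately show "c i = c' i"
  proof (cases "i \<le> ?M")
    case False
    then show ?thesis using assms unfolding poly_rep_def by simp
  qed (use coeffs_eq_0_if_sum_eq_0[of ?M "\<lambda>i. c i - c' i" i] in simp)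
qed

lemma poly_deg_eq: assumes "lead_rep C y a c n" shows "poly_deg C y a = n"
  unfolding poly_deg_def
proof (rule Least_equality)
  show "\<exists>c. (\<forall>i\<le>n. c i \<in> C) \<and> a = (\<Sum>i\<le>n. c i * y ^ i)"
    using assms unfolding lead_rep_def poly_rep_def by auto
next
  fix m assume "\<exists>c. (\<forall>i\<le>m. c i \<in> C) \<and> a = (\<Sum>i\<le>m. c i * y ^ i)"
  then obtain c' where c': "\<forall>i\<le>m. c' i \<in> C" "a = (\<Sum>i\<le>m. c' i * y ^ i)" by blast
  define c'' where "c'' i = (if i \<le> m then c' i else 0)" for i
  have "poly_rep C y a c'' m" unfolding poly_rep_def c''_def using c' zero_mem by auto
  then have "c = c''" using assms poly_rep_unique unfolding lead_rep_def by blast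
  then show "n \<le> m" using assms unfolding lead_rep_def c''_def by (auto split: if_splits)
qed

lemma poly_rep_imp_lead_rep: "poly_rep C y a c N \<Longrightarrow> a \<noteq> 0 \<Longrightarrow> \<exists>n\<le>N. lead_rep C y a c n"
proof (induction N)
  case (Suc N)
  show ?case
  proof (cases "c (Suc N) = 0")
    case True
    then have "\<forall>i>N. c i = 0" using Suc.prems unfolding poly_rep_def by (metis Suc_lessI)
    then have "poly_rep C y a c N" using Suc.prems True unfolding poly_rep_def by auto
    then show ?thesis using Suc.IH Suc.prems by (meson le_Suc_eq)
  next
    case False
    then show ?thesis using Suc.prems unfolding lead_rep_def by auto
  qed
qed (auto simp: lead_rep_def poly_rep_def)

lemma poly_rep_0: "poly_rep C y 0 (\<lambda>_. 0) N"
  unfolding poly_rep_def using zero_mem by simp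

lemma poly_rep_of_0: "poly_rep C y 0 c N \<Longrightarrow> c i = 0"
  using poly_rep_unique[OF _ poly_rep_0] by metis

lemma lead_rep_neq_0: "lead_rep C y a c n \<Longrightarrow> a \<noteq> 0"
  using poly_rep_of_0 unfolding lead_rep_def by metis

lemma poly_rep_monom: "e \<in> C \<Longrightarrow> poly_rep C y (e * y ^ k) (\<lambda>i. if i = k then e else 0) k"
  unfolding poly_rep_def using zero_mem
  by (simp add: if_distrib[of "\<lambda>x. x * _"] sum.delta cong: if_cong)

lemma lead_rep_monom:
  "e \<in> C \<Longrightarrow> e \<noteq> 0 \<Longrightarrow> lead_rep C y (e * y ^ k) (\<lambda>i. if i = k then e else 0) k"
  using poly_rep_monom unfolding lead_rep_def by simp

lemma lead_rep_const: "e \<in> C \<Longrightarrow> e \<noteq> 0 \<Longrightarrow> lead_rep C y e (\<lambda>i. if i = 0 then e else 0) 0"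
  using lead_rep_monom[of e 0] by simp

lemma poly_rep_add:
  "poly_rep C y a c N \<Longrightarrow> poly_rep C y b e N \<Longrightarrow> poly_rep C y (a + b) (\<lambda>i. c i + e i) N"
  unfolding poly_rep_def by (simp add: add_mem distrib_right sum.distrib)

lemma poly_rep_uminus: "poly_rep C y a c N \<Longrightarrow> poly_rep C y (- a) (\<lambda>i. - c i) N"
  unfolding poly_rep_def by (simp add: uminus_mem sum_negf)

lemma poly_rep_mult_left: "e \<in> C \<Longrightarrow> poly_rep C y a c N \<Longrightarrow> poly_rep C y (e * a) (\<lambda>i. e * c i) N"
  unfolding poly_rep_def by (simp add: mult_mem sum_distrib_left mult.assoc)

lemma poly_rep_mult_y:
  assumes "poly_rep C y a c N"
  shows "poly_rep C y (y * a) (\<lambda>i. (if i = 0 then 0 else c (i - 1)) + (y * c i - c i * y)) (Suc N)"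
proof -
  have cC: "\<forall>i. c i \<in> C" and cz: "\<forall>i>N. c i = 0" and a: "a = (\<Sum>i\<le>N. c i * y ^ i)"
    using assms unfolding poly_rep_def by auto
  have "y * a = (\<Sum>i\<le>N. c i * y ^ Suc i + (y * c i - c i * y) * y ^ i)"
    unfolding a sum_distrib_left by (intro sum.cong) (simp_all add: algebra_simps)
  also have "\<dots> = (\<Sum>i\<le>N. c i * y ^ Suc i) + (\<Sum>i\<le>N. (y * c i - c i * y) * y ^ i)"
    by (simp add: sum.distrib)
  also have "(\<Sum>i\<le>N. c i * y ^ Suc i) = (\<Sum>i\<le>Suc N. (if i = 0 then 0 else c (i - 1)) * y ^ i)"
    by (subst sum.atMost_Suc_shift) simp
  also have "(\<Sum>i\<le>N. (y * c i - c i * y) * y ^ i) = (\<Sum>i\<le>Suc N. (y * c i - c i * y) * y ^ i)"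
    using cz by simp
  finally have "y * a
      = (\<Sum>i\<le>Suc N. ((if i = 0 then 0 else c (i - 1)) + (y * c i - c i * y)) * y ^ i)"
    by (simp add: sum.distrib distrib_right)
  moreover have "(if i = 0 then 0 else c (i - 1)) + (y * c i - c i * y) \<in> C" for i
    using cC zero_mem commutator_mem add_mem by simp
  ultimately show ?thesis using cz unfolding poly_rep_def by simp
qed

lemma poly_rep_sum:
  "finite A \<Longrightarrow> (\<And>j. j \<in> A \<Longrightarrow> poly_rep C y (f j) (g j) N)
   \<Longrightarrow> poly_rep C y (\<Sum>j\<in>A. f j) (\<lambda>i. \<Sum>j\<in>A. g j i) N"
proof (induction A rule: finite_induct)
  case (insert x F)
  then show ?case using poly_rep_add[of "f x" "g x" N "sum f F"] by simp
qed (simp add: poly_rep_0)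

lemma ring_cl_mult_poly_rep:
  assumes "S \<subseteq> C \<union> {y}" "x \<in> ring_cl S" "poly_rep C y b e M"
  shows "\<exists>c N. poly_rep C y (x * b) c N"
  using assms(2,3)
proof (induction x arbitrary: b e M rule: ring_cl.induct)
  case (rc_base x)
  then consider "x \<in> C" | "x = y" using assms(1) by blast
  then show ?case
    by cases (use rc_base.prems poly_rep_mult_left poly_rep_mult_y in blast)+
next
  case (rc_add x1 x2)
  then obtain c1 N1 c2 N2 where "poly_rep C y (x1 * b) c1 N1" "poly_rep C y (x2 * b) c2 N2"
    by blast
  then have "poly_rep C y (x1 * b) c1 (max N1 N2)" "poly_rep C y (x2 * b) c2 (max N1 N2)"
    by (auto intro: poly_rep_mono)
  then show ?case using poly_rep_add by (metis distrib_right)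
next
  case (rc_neg x)
  then obtain c N where "poly_rep C y (x * b) c N" by blast
  then show ?case using poly_rep_uminus by (metis minus_mult_left)
next
  case (rc_mult x1 x2)
  then obtain c N where "poly_rep C y (x2 * b) c N" by blast
  then show ?case using rc_mult.IH(1) by (metis mult.assoc)
qed auto

lemma ring_cl_poly_rep: "S \<subseteq> C \<union> {y} \<Longrightarrow> x \<in> ring_cl S \<Longrightarrow> \<exists>c N. poly_rep C y x c N"
  using ring_cl_mult_poly_rep[OF _ _ poly_rep_monom[OF one_mem, of 0]] by simp

lemma ring_cl_lead_rep:
  "x \<in> poly_ring \<Longrightarrow> x \<noteq> 0 \<Longrightarrow> \<exists>c. lead_rep C y x c (poly_deg C y x)"
proof -
  assume "x \<in> poly_ring" "x \<noteq> 0"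
  then obtain c n where "lead_rep C y x c n"
    using ring_cl_poly_rep[of "C \<union> {y}" x] poly_rep_imp_lead_rep by blast
  then show ?thesis using poly_deg_eq by auto
qed

lemma poly_rep_mult_y_power:
  "poly_rep C y b e m \<Longrightarrow> \<exists>h. poly_rep C y (y ^ i * b) h (m + i) \<and> h (m + i) = e m"
proof (induction i)
  case (Suc i)
  then obtain h where h: "poly_rep C y (y ^ i * b) h (m + i)" "h (m + i) = e m" by auto
  define h' where "h' j = (if j = 0 then 0 else h (j - 1)) + (y * h j - h j * y)" for j
  have "h (Suc (m + i)) = 0" using h unfolding poly_rep_def by auto
  then have "h' (m + Suc i) = e m" using h(2) unfolding h'_def by simp
  moreover have "poly_rep C y (y ^ Suc i * b) h' (m + Suc i)"
    using poly_rep_mult_y[OF h(1)] unfolding h'_def by (simp add: mult.assoc)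
  ultimately show ?case by blast
next
  case 0
  then show ?case by (intro exI[of _ e]) simp
qed

lemma lead_rep_mult:
  assumes a: "lead_rep C y a c n" and b: "lead_rep C y b e m"
  shows "\<exists>g. lead_rep C y (a * b) g (n + m) \<and> g (n + m) = c n * e m"
proof -
  have "\<forall>i. \<exists>h. poly_rep C y (y ^ i * b) h (m + i) \<and> h (m + i) = e m"
    using b poly_rep_mult_y_power unfolding lead_rep_def by blast
  then obtain h where h: "\<And>i. poly_rep C y (y ^ i * b) (h i) (m + i) \<and> h i (m + i) = e m"
    by metis
  have cC: "\<And>i. c i \<in> C" using a unfolding lead_rep_def poly_rep_def by auto
  have "poly_rep C y (c i * (y ^ i * b)) (\<lambda>j. c i * h i j) (n + m)" if "i \<le> n" for i
    by (rule poly_rep_mono[OF poly_rep_mult_left[OF cC h[THEN conjunct1]]]) (use that in simp)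
  moreover have "a * b = (\<Sum>i\<le>n. c i * (y ^ i * b))"
    using a unfolding lead_rep_def poly_rep_def by (simp add: sum_distrib_right mult.assoc)
  ultimately have rep: "poly_rep C y (a * b) (\<lambda>j. \<Sum>i\<le>n. c i * h i j) (n + m)"
    using poly_rep_sum[of "{..n}" "\<lambda>i. c i * (y ^ i * b)"] by simp
  have "h i (n + m) = 0" if "i < n" for i
    using h[of i] that unfolding poly_rep_def by auto
  then have "(\<Sum>i<n. c i * h i (n + m)) = 0" by simp
  then have "(\<Sum>i\<le>n. c i * h i (n + m)) = c n * e m"
    using h[of n] by (simp add: lessThan_Suc_atMost[symmetric] add.commute[of n])
  moreover have "c n * e m \<noteq> 0" using a b unfolding lead_rep_def by simp
  ultimately show ?thesis using rep unfolding lead_rep_def by auto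
qed

lemma lead_rep_mult_const_right:
  "lead_rep C y a c n \<Longrightarrow> p \<in> C \<Longrightarrow> p \<noteq> 0 \<Longrightarrow> \<exists>g. lead_rep C y (a * p) g n \<and> g n = c n * p"
  using lead_rep_mult[OF _ lead_rep_const, of a c n p] by auto

lemma lead_rep_mult_const_left:
  "lead_rep C y a c n \<Longrightarrow> p \<in> C \<Longrightarrow> p \<noteq> 0 \<Longrightarrow> \<exists>g. lead_rep C y (p * a) g n \<and> g n = p * c n"
  using lead_rep_mult[OF lead_rep_const, of p a c n] by auto

lemma poly_deg_mult:
  "a \<in> poly_ring \<Longrightarrow> b \<in> poly_ring \<Longrightarrow> a \<noteq> 0 \<Longrightarrow> b \<noteq> 0
   \<Longrightarrow> poly_deg C y (a * b) = poly_deg C y a + poly_deg C y b"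
  using ring_cl_lead_rep[of a] ring_cl_lead_rep[of b] lead_rep_mult poly_deg_eq by blast

lemma lead_rep_diff:
  assumes "lead_rep C y a c n" "lead_rep C y b e n" "c n = e n"
  shows "a - b = 0 \<or> poly_deg C y (a - b) < n"
proof (cases "a - b = 0")
  case False
  have "poly_rep C y (a + - b) (\<lambda>i. c i + - e i) n"
    using poly_rep_add[OF _ poly_rep_uminus] assms unfolding lead_rep_def by blast
  then obtain n' where "n' \<le> n" "lead_rep C y (a - b) (\<lambda>i. c i + - e i) n'"
    using False poly_rep_imp_lead_rep by (metis diff_conv_add_uminus)
  moreover from this have "n' \<noteq> n" using assms unfolding lead_rep_def by auto
  ultimately show ?thesis using poly_deg_eq by fastforce
qed simp

lemma lead_rep_add:
  assumes "lead_rep C y a c n" "lead_rep C y b e n" "c n + e n \<noteq> 0"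
  shows "lead_rep C y (a + b) (\<lambda>i. c i + e i) n"
  using assms poly_rep_add unfolding lead_rep_def by blast

lemma unit_mem:
  assumes "p \<in> poly_ring" "q \<in> poly_ring" "p * q = 1"
  shows "p \<in> C"
proof -
  have "p \<noteq> 0" "q \<noteq> 0" using assms(3) by auto
  then obtain c e where reps: "lead_rep C y p c (poly_deg C y p)" "lead_rep C y q e (poly_deg C y q)"
    using assms(1,2) ring_cl_lead_rep by blast
  have "poly_deg C y p + poly_deg C y q = poly_deg C y 1"
    using lead_rep_mult[OF reps] poly_deg_eq assms(3) by metis
  also have "\<dots> = 0" using poly_deg_eq[OF lead_rep_const[OF one_mem]] by simp
  finally have "p = c 0" using reps(1) unfolding lead_rep_def poly_rep_def by simp
  then show ?thesis using reps(1) unfolding lead_rep_def poly_rep_def by simp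
qed

end

locale skew_poly_field = skew_poly C y z for C :: "'a::division_ring set" and y z +
  assumes inverse_mem: "a \<in> C \<Longrightarrow> inverse a \<in> C"
begin

lemma lead_term_cancel:
  assumes "a \<in> poly_ring" "b \<in> poly_ring" "a \<noteq> 0" "b \<noteq> 0" "poly_deg C y b \<le> poly_deg C y a"
  shows "\<exists>q\<in>poly_ring. a - b * q = 0 \<or> poly_deg C y (a - b * q) < poly_deg C y a"
proof -
  define n m where "n = poly_deg C y a" and "m = poly_deg C y b"
  obtain c e where c: "lead_rep C y a c n" and e: "lead_rep C y b e m"
    using ring_cl_lead_rep assms unfolding n_def m_def by blast
  have cn: "c n \<in> C" "c n \<noteq> 0" and em: "e m \<in> C" "e m \<noteq> 0"
    using c e unfolding lead_rep_def poly_rep_def by auto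
  define \<gamma> where "\<gamma> = inverse (e m) * c n"
  have \<gamma>: "\<gamma> \<in> C" "\<gamma> \<noteq> 0"
    using cn em inverse_mem mult_mem unfolding \<gamma>_def by auto
  have "e m * \<gamma> = c n" using em(2) unfolding \<gamma>_def by (simp flip: mult.assoc)
  define q where "q = \<gamma> * y ^ (n - m)"
  have q: "q \<in> poly_ring"
    unfolding q_def using \<gamma> by (intro rc_mult rc_base ring_cl_power) auto
  obtain g where "lead_rep C y (b * q) g (m + (n - m))" "g (m + (n - m)) = e m * \<gamma>"
    using lead_rep_mult[OF e lead_rep_monom[OF \<gamma>]] unfolding q_def by auto
  moreover have "m + (n - m) = n" using assms(5) unfolding n_def m_def by simp
  ultimately have g: "lead_rep C y (b * q) g n" "g n = c n"
    using \<open>e m * \<gamma> = c n\<close> by simp_all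
  then have "a - b * q = 0 \<or> poly_deg C y (a - b * q) < n"
    using lead_rep_diff[OF c g(1)] g(2) by simp
  then show ?thesis using q unfolding n_def by blast
qed

lemma right_division:
  assumes "b \<in> poly_ring" "b \<noteq> 0" "a \<in> poly_ring"
  shows "\<exists>q\<in>poly_ring. \<exists>r\<in>poly_ring. a = b * q + r \<and> (r = 0 \<or> poly_deg C y r < poly_deg C y b)"
  using assms(3)
proof (induction "poly_deg C y a" arbitrary: a rule: less_induct)
  case less
  show ?case
  proof (cases "a = 0 \<or> poly_deg C y a < poly_deg C y b")
    case True
    then have "a = b * 0 + a \<and> (a = 0 \<or> poly_deg C y a < poly_deg C y b)" by auto
    then show ?thesis using less.prems ring_cl_zero by blast
  next
    case False
    then obtain q0 where q0: "q0 \<in> poly_ring"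
        and cancel: "a - b * q0 = 0 \<or> poly_deg C y (a - b * q0) < poly_deg C y a"
      using lead_term_cancel less.prems assms(1,2) by (meson not_le)
    have "a - b * q0 \<in> poly_ring"
      using less.prems assms(1) q0 by (intro ring_cl_diff rc_mult)
    then obtain q1 r where "q1 \<in> poly_ring" "r \<in> poly_ring" "a - b * q0 = b * q1 + r"
        "r = 0 \<or> poly_deg C y r < poly_deg C y b"
      using cancel less.hyps ring_cl_zero by (metis add.right_neutral mult_zero_right)
    moreover from this have "a = b * (q0 + q1) + r" by (simp add: algebra_simps)
    ultimately show ?thesis using q0 rc_add by blast
  qed
qed

lemma right_ore:
  assumes "u \<in> poly_ring" "v \<in> poly_ring" "u \<noteq> 0" "v \<noteq> 0"
  shows "\<exists>x\<in>poly_ring. \<exists>x'\<in>poly_ring. x \<noteq> 0 \<and> x' \<noteq> 0 \<and> u * x = v * x'"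
proof -
  have ordered: "\<exists>x\<in>poly_ring. \<exists>x'\<in>poly_ring. x \<noteq> 0 \<and> x' \<noteq> 0 \<and> u * x = v * x'"
    if "u \<in> poly_ring" "v \<in> poly_ring" "u \<noteq> 0" "v \<noteq> 0" "poly_deg C y v \<le> poly_deg C y u"
    for u v
    using that
  proof (induction "poly_deg C y u + poly_deg C y v" arbitrary: u v rule: less_induct)
    case less
    obtain q r where qr: "q \<in> poly_ring" "r \<in> poly_ring" "u = v * q + r"
        "r = 0 \<or> poly_deg C y r < poly_deg C y v"
      using right_division less.prems by blast
    show ?case
    proof (cases "r = 0")
      case True
      then have "u * 1 = v * q" "q \<noteq> 0" using qr less.prems by auto
      moreover have "(1::'a) \<in> poly_ring" "(1::'a) \<noteq> 0" by (simp_all add: rc_one)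
      ultimately show ?thesis using qr(1) by blast
    next
      case False
      moreover have "poly_deg C y v + poly_deg C y r < poly_deg C y u + poly_deg C y v"
        using False qr(4) less.prems(5) by linarith
      ultimately obtain x x' where x: "x \<in> poly_ring" "x' \<in> poly_ring" "x \<noteq> 0" "x' \<noteq> 0" "v * x = r * x'"
        using less.hyps[of v r] qr(2,4) less.prems(2,4) by (meson less_imp_le)
      then have eq: "u * x' = v * (q * x' + x)" using qr(3) by (simp add: algebra_simps)
      moreover have "u * x' \<noteq> 0" using less.prems(3) x(4) by simp
      ultimately have "q * x' + x \<noteq> 0" by (metis mult_zero_right)
      moreover have "q * x' + x \<in> poly_ring" using x qr by (metis rc_add rc_mult)
      ultimately show ?thesis using x eq by blast
    qed
  qed
  show ?thesis
  proof (cases "poly_deg C y v \<le> poly_deg C y u")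
    case False
    then have "poly_deg C y u \<le> poly_deg C y v" by simp
    then obtain x x' where "x \<in> poly_ring" "x' \<in> poly_ring" "x \<noteq> 0" "x' \<noteq> 0" "v * x = u * x'"
      using ordered[OF assms(2,1,4,3)] by blast
    then show ?thesis by (metis (no_types, lifting))
  qed (rule ordered[OF assms])
qed

lemma right_ideal_principal:
  assumes "right_ideal poly_ring L" "L \<noteq> {0}"
  shows "\<exists>g\<in>L. g \<noteq> 0 \<and> L = {g * p | p. p \<in> poly_ring}"
proof -
  have L: "L \<subseteq> poly_ring" "0 \<in> L" "\<And>u v. u \<in> L \<Longrightarrow> v \<in> L \<Longrightarrow> u + v \<in> L"
      "\<And>u p. u \<in> L \<Longrightarrow> p \<in> poly_ring \<Longrightarrow> u * p \<in> L"
    using assms(1) unfolding right_ideal_def by auto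
  obtain u0 where "u0 \<in> L" "u0 \<noteq> 0" using assms(2) L(2) by blast
  then obtain g where g: "g \<in> L" "g \<noteq> 0" and g_min: "\<And>u. u \<in> L \<Longrightarrow> u \<noteq> 0 \<Longrightarrow> poly_deg C y g \<le> poly_deg C y u"
    using ex_has_least_nat[of "\<lambda>u. u \<in> L \<and> u \<noteq> 0" u0 "poly_deg C y"] by blast
  have "u \<in> {g * p | p. p \<in> poly_ring}" if u: "u \<in> L" for u
  proof -
    obtain q r where qr: "q \<in> poly_ring" "r \<in> poly_ring" "u = g * q + r"
        "r = 0 \<or> poly_deg C y r < poly_deg C y g"
      using right_division g L(1) u by blast
    have "r = u + g * (- q)" using qr by simp
    then have "r \<in> L" using L u g qr(1) rc_neg by metis
    then have "r = 0" using qr g_min by (meson not_le)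
    then show ?thesis using qr by auto
  qed
  moreover have "g * p \<in> L" if "p \<in> poly_ring" for p using L(4) g that by blast
  ultimately show ?thesis using g by blast
qed

end

locale weyl_setting =
  fixes K :: "'a::division_ring set" and t d :: 'a
  assumes central_subfield: "central_subfield K"
    and of_nat_neq_0: "\<forall>n::nat. n > 0 \<longrightarrow> (of_nat n :: 'a) \<noteq> 0"
    and commutator_dt: "d * t - t * d = 1"
begin

abbreviation "F \<equiv> Kfrac_d K d"
abbreviation "P \<equiv> Kpoly_d K d"
abbreviation "R \<equiv> Kfrac_d_t K t d"
abbreviation "W \<equiv> Weyl K t d"
abbreviation "Q \<equiv> Quot1 K t d"

lemma K_closed:
  "0 \<in> K" "1 \<in> K" "x \<in> K \<Longrightarrow> y \<in> K \<Longrightarrow> x + y \<in> K" "x \<in> K \<Longrightarrow> y \<in> K \<Longrightarrow> x * y \<in> K"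
  "x \<in> K \<Longrightarrow> - x \<in> K" "x \<in> K \<Longrightarrow> inverse x \<in> K"
  using central_subfield unfolding central_subfield_def by auto

lemma K_central: "c \<in> K \<Longrightarrow> c * x = x * c"
  using central_subfield unfolding central_subfield_def by auto

lemma F_closed:
  "0 \<in> F" "1 \<in> F" "x \<in> F \<Longrightarrow> y \<in> F \<Longrightarrow> x + y \<in> F" "x \<in> F \<Longrightarrow> y \<in> F \<Longrightarrow> x * y \<in> F"
  "x \<in> F \<Longrightarrow> - x \<in> F" "x \<in> F \<Longrightarrow> inverse x \<in> F"
  unfolding Kfrac_d_def by (simp_all add: div_cl_zero div_cl.intros)

lemma P_closed:
  "0 \<in> P" "1 \<in> P" "x \<in> P \<Longrightarrow> y \<in> P \<Longrightarrow> x + y \<in> P" "x \<in> P \<Longrightarrow> y \<in> P \<Longrightarrow> x * y \<in> P"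
  "x \<in> P \<Longrightarrow> - x \<in> P"
  unfolding Kpoly_d_def by (simp_all add: ring_cl_zero ring_cl.intros)

lemma W_closed:
  "1 \<in> W" "x \<in> W \<Longrightarrow> - x \<in> W" "x \<in> W \<Longrightarrow> y \<in> W \<Longrightarrow> x + y \<in> W" "x \<in> W \<Longrightarrow> y \<in> W \<Longrightarrow> x - y \<in> W"
  "x \<in> W \<Longrightarrow> y \<in> W \<Longrightarrow> x * y \<in> W"
  unfolding Weyl_def by (simp_all add: ring_cl_diff ring_cl.intros)

lemma Q_closed:
  "1 \<in> Q" "x \<in> Q \<Longrightarrow> y \<in> Q \<Longrightarrow> x + y \<in> Q" "x \<in> Q \<Longrightarrow> y \<in> Q \<Longrightarrow> x - y \<in> Q"
  "x \<in> Q \<Longrightarrow> y \<in> Q \<Longrightarrow> x * y \<in> Q"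
  unfolding Quot1_def by (simp_all add: div_cl.intros div_cl_diff)

lemma K_subset_P: "K \<subseteq> P" and d_mem_P: "d \<in> P"
  unfolding Kpoly_d_def by (auto intro: rc_base)

lemma P_subset_F: "P \<subseteq> F"
  unfolding Kpoly_d_def Kfrac_d_def by (rule ring_cl_subset_div_cl)

lemma P_subset_W: "P \<subseteq> W"
  unfolding Weyl_def Kpoly_d_def by (rule ring_cl_mono) auto

lemma W_subset_R: "W \<subseteq> R"
proof -
  have "K \<union> {t, d} \<subseteq> F \<union> {t}" using K_subset_P d_mem_P P_subset_F by auto
  then show ?thesis unfolding Weyl_def Kfrac_d_t_def by (rule ring_cl_mono)
qed

lemma W_subset_Q: "W \<subseteq> Q"
  unfolding Quot1_def by (auto intro: dc_base)

lemma commutator_t_K_d: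
  assumes "s \<in> K \<union> {d}" shows "t * s - s * t \<in> {0, - 1}"
proof (cases "s = d")
  case True
  then have "t * s - s * t = - 1" using commutator_dt by (simp add: algebra_simps)
  then show ?thesis by simp
next
  case False
  then have "s * t = t * s" using assms K_central by simp
  then show ?thesis by simp
qed

lemma F_commute:
  assumes "x \<in> F" "y \<in> F" shows "x * y = y * x"
proof (rule div_cl_commutative)
  show "s * s' = s' * s" if "s \<in> K \<union> {d}" "s' \<in> K \<union> {d}" for s s'
    using that K_central[of s s'] K_central[of s' s] by (metis UnE singletonD)
qed (use assms in \<open>simp_all add: Kfrac_d_def\<close>)

lemma commutator_t_mem_F: "a \<in> F \<Longrightarrow> t * a - a * t \<in> F"
  unfolding Kfrac_d_def
proof (rule div_cl_commutator_closed)
  fix s assume "s \<in> K \<union> {d}"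
  then have "t * s - s * t \<in> {0, - 1}" by (rule commutator_t_K_d)
  then show "t * s - s * t \<in> div_cl (K \<union> {d})"
    using div_cl_zero div_cl.dc_neg[OF div_cl.dc_one] by auto
qed

lemma commutator_t_mem_P: "a \<in> P \<Longrightarrow> t * a - a * t \<in> P"
  unfolding Kpoly_d_def
proof (rule ring_cl_commutator_closed)
  fix s assume "s \<in> K \<union> {d}"
  then have "t * s - s * t \<in> {0, - 1}" by (rule commutator_t_K_d)
  then show "t * s - s * t \<in> ring_cl (K \<union> {d})"
    using ring_cl_zero ring_cl.rc_neg[OF ring_cl.rc_one] by auto
qed

lemma commutator_t_neg_d: "t * - d - - d * t = 1"
  using commutator_dt by (simp add: algebra_simps)

sublocale F_t: skew_poly_field F t "- d"
proof
  show "a \<in> F \<Longrightarrow> a * - d = - d * a" for a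
    using F_commute F_closed(5) unfolding Kfrac_d_def by (auto intro: dc_base)
qed (use F_closed commutator_t_mem_F commutator_t_neg_d of_nat_neq_0 in auto)

sublocale P_t: skew_poly P t "- d"
proof
  show "a \<in> P \<Longrightarrow> a * - d = - d * a" for a
    using F_t.commute_z P_subset_F by blast
qed (use P_closed commutator_t_mem_P commutator_t_neg_d of_nat_neq_0 in auto)

sublocale K_d: skew_poly_field K d t
proof
  show "d * a - a * d \<in> K" if "a \<in> K" for a using K_central[OF that, of d] K_closed(1) by simp
qed (use K_closed K_central commutator_dt of_nat_neq_0 in auto)

lemma R_eq: "R = F_t.poly_ring" and P_eq: "P = K_d.poly_ring"
  unfolding Kfrac_d_t_def Kpoly_d_def by simp_all

lemma lead_coeff_mem_P:
  assumes "x \<in> W" "lead_rep F t x c n" shows "c n \<in> P"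
proof -
  have "K \<union> {t, d} \<subseteq> P \<union> {t}" using K_subset_P d_mem_P by auto
  then obtain c' N where "poly_rep P t x c' N"
    using P_t.ring_cl_poly_rep assms(1) unfolding Weyl_def by blast
  moreover from this have "c' = c"
    using F_t.poly_rep_unique[OF poly_rep_coeffs_mono[OF P_subset_F]] assms(2)
    unfolding lead_rep_def by blast
  ultimately show ?thesis unfolding poly_rep_def by auto
qed

text \<open>Well-definedness of \<open>deg\<^sub>t\<close>: a common right multiple of two denominators (Ore condition)
  shows that all representations \<open>a b\<^sup>-\<^sup>1\<close> of \<open>q\<close> have the same degree difference.\<close>

lemma deg_t_eq:
  assumes a: "a \<in> R" "a \<noteq> 0" and b: "b \<in> R" "b \<noteq> 0" and "q * b = a"
  shows "deg_t K t d q = int (poly_deg F t a) - int (poly_deg F t b)"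
  unfolding deg_t_def deg_t_poly_def poly_deg_def[symmetric]
proof (rule the_equality)
  have "q = a * inverse b" using assms(5) b(2) by (metis mult.assoc right_inverse mult_1_right)
  then show "\<exists>a' b'. a' \<in> R \<and> b' \<in> R \<and> b' \<noteq> 0 \<and> q = a' * inverse b' \<and>
      int (poly_deg F t a) - int (poly_deg F t b) = int (poly_deg F t a') - int (poly_deg F t b')"
    using a b by blast
next
  fix m assume "\<exists>a' b'. a' \<in> R \<and> b' \<in> R \<and> b' \<noteq> 0 \<and> q = a' * inverse b' \<and>
      m = int (poly_deg F t a') - int (poly_deg F t b')"
  then obtain a' b' where a'b': "a' \<in> R" "b' \<in> R" "b' \<noteq> 0" "q = a' * inverse b'"
      and m: "m = int (poly_deg F t a') - int (poly_deg F t b')" by blast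
  have "a' = q * b'" using a'b'(3,4) by (simp add: mult.assoc)
  moreover have "q \<noteq> 0" using assms(5) a(2) by auto
  ultimately have "a' \<noteq> 0" using a'b'(3) by simp
  obtain x x' where x: "x \<in> R" "x' \<in> R" "x \<noteq> 0" "x' \<noteq> 0" "b * x = b' * x'"
    using F_t.right_ore[of b b'] b a'b' unfolding R_eq by blast
  have "a * x = a' * x'" using x(5) assms(5) \<open>a' = q * b'\<close> by (metis mult.assoc)
  then have "poly_deg F t a + poly_deg F t x = poly_deg F t a' + poly_deg F t x'"
    using F_t.poly_deg_mult[of a x] F_t.poly_deg_mult[of a' x'] a x a'b' \<open>a' \<noteq> 0\<close>
    unfolding R_eq by simp
  moreover have "poly_deg F t b + poly_deg F t x = poly_deg F t b' + poly_deg F t x'"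
    using F_t.poly_deg_mult[of b x] F_t.poly_deg_mult[of b' x'] b x a'b' unfolding R_eq by simp
  ultimately show "m = int (poly_deg F t a) - int (poly_deg F t b)" using m by linarith
qed

end

text \<open>A \<open>P\<close>-module \<open>V\<close> inside the quotient division ring, the scalar action \<open>act\<close> being
  right multiplication for right ideals and left multiplication for their duals. The
  \<open>t\<close>-degree on \<open>V\<close> is read off after multiplying by a fixed \<open>b \<noteq> 0\<close> with \<open>V b \<subseteq> A\<^sub>1\<close>:
  \<open>deg\<^sub>t u = deg (u b) - deg b\<close>.\<close>

locale lead_coeff_module = weyl_setting +
  fixes V :: "'a set" and b :: 'a and act :: "'a \<Rightarrow> 'a \<Rightarrow> 'a"
  assumes b_mem: "b \<in> W" and b_neq_0: "b \<noteq> 0"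
    and mult_b_mem: "u \<in> V \<Longrightarrow> u * b \<in> W"
    and nontrivial: "\<exists>u\<in>V. u \<noteq> 0"
    and add_mem: "u \<in> V \<Longrightarrow> v \<in> V \<Longrightarrow> u + v \<in> V"
    and diff_mem: "u \<in> V \<Longrightarrow> v \<in> V \<Longrightarrow> u - v \<in> V"
    and act_mem: "u \<in> V \<Longrightarrow> p \<in> P \<Longrightarrow> act p u \<in> V"
    and act_lead_rep: "lead_rep F t (u * b) c n \<Longrightarrow> p \<in> P \<Longrightarrow> p \<noteq> 0
      \<Longrightarrow> \<exists>g. lead_rep F t (act p u * b) g n \<and> g n = c n * p"
    and act_act: "p \<in> P \<Longrightarrow> q \<in> P \<Longrightarrow> act p (act q u) = act (q * p) u"
    and act_scalar: "k \<in> K \<Longrightarrow> act k u = k * u"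
begin

lemma mult_b_neq_0: "u \<noteq> 0 \<Longrightarrow> u * b \<noteq> 0"
  using b_neq_0 by simp

lemma deg_t_eq_poly_deg:
  "u \<in> V \<Longrightarrow> u \<noteq> 0 \<Longrightarrow> deg_t K t d u = int (poly_deg F t (u * b)) - int (poly_deg F t b)"
  using deg_t_eq[of "u * b" b u] mult_b_mem b_mem b_neq_0 W_subset_R by auto

lemma lead_rep_mult_b: "u \<in> V \<Longrightarrow> u \<noteq> 0 \<Longrightarrow> \<exists>c. lead_rep F t (u * b) c (poly_deg F t (u * b))"
  using F_t.ring_cl_lead_rep mult_b_mem W_subset_R mult_b_neq_0 unfolding R_eq by blast

definition min_deg :: nat where
  "min_deg = (LEAST n. \<exists>u\<in>V. u \<noteq> 0 \<and> poly_deg F t (u * b) = n)"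

lemma min_deg_le: "u \<in> V \<Longrightarrow> u \<noteq> 0 \<Longrightarrow> min_deg \<le> poly_deg F t (u * b)"
  unfolding min_deg_def by (rule Least_le) blast

lemma min_deg_attained: "\<exists>u\<in>V. u \<noteq> 0 \<and> poly_deg F t (u * b) = min_deg"
proof -
  have "\<exists>n. \<exists>u\<in>V. u \<noteq> 0 \<and> poly_deg F t (u * b) = n" using nontrivial by blast
  then show ?thesis unfolding min_deg_def by (rule LeastI_ex)
qed

lemma min_deg_part_eq:
  "min_deg_part K t d V = {u \<in> V. u \<noteq> 0 \<and> poly_deg F t (u * b) = min_deg} \<union> {0}"
proof -
  have "(\<forall>v\<in>V. v \<noteq> 0 \<longrightarrow> deg_t K t d u \<le> deg_t K t d v) \<longleftrightarrow> poly_deg F t (u * b) = min_deg"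
    if "u \<in> V" "u \<noteq> 0" for u
  proof
    assume "\<forall>v\<in>V. v \<noteq> 0 \<longrightarrow> deg_t K t d u \<le> deg_t K t d v"
    moreover obtain v where "v \<in> V" "v \<noteq> 0" "poly_deg F t (v * b) = min_deg"
      using min_deg_attained by blast
    ultimately have "poly_deg F t (u * b) \<le> min_deg"
      using deg_t_eq_poly_deg that by fastforce
    then show "poly_deg F t (u * b) = min_deg" using min_deg_le[OF that] by simp
  qed (use deg_t_eq_poly_deg min_deg_le that in fastforce)
  then show ?thesis unfolding min_deg_part_def by blast
qed

definition lead_coeffs :: "'a set" where
  "lead_coeffs = {c min_deg | u c. u \<in> V \<and> lead_rep F t (u * b) c min_deg} \<union> {0}"

lemma mem_lead_coeffs:
  "l \<in> lead_coeffs \<longleftrightarrow> l = 0 \<or> (\<exists>u c. u \<in> V \<and> lead_rep F t (u * b) c min_deg \<and> c min_deg = l)"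
  unfolding lead_coeffs_def by blast

lemma lead_coeffs_subset_P: "lead_coeffs \<subseteq> P"
proof
  fix l assume "l \<in> lead_coeffs"
  then show "l \<in> P" unfolding mem_lead_coeffs using lead_coeff_mem_P mult_b_mem P_closed(1) by auto
qed

lemma lead_coeffs_add:
  assumes "l \<in> lead_coeffs" "l' \<in> lead_coeffs" shows "l + l' \<in> lead_coeffs"
proof (cases "l = 0 \<or> l' = 0 \<or> l + l' = 0")
  case True
  then show ?thesis using assms mem_lead_coeffs[of 0] by (elim disjE) simp_all
next
  case False
  then obtain u c u' c' where "u \<in> V" "lead_rep F t (u * b) c min_deg" "c min_deg = l"
      "u' \<in> V" "lead_rep F t (u' * b) c' min_deg" "c' min_deg = l'"
    using assms mem_lead_coeffs by meson
  moreover from this have "lead_rep F t ((u + u') * b) (\<lambda>i. c i + c' i) min_deg"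
    using F_t.lead_rep_add False by (simp add: distrib_right)
  ultimately show ?thesis using add_mem mem_lead_coeffs by fastforce
qed

lemma lead_coeffs_mult:
  assumes "l \<in> lead_coeffs" "p \<in> P" shows "l * p \<in> lead_coeffs"
proof (cases "l = 0 \<or> p = 0")
  case True
  then show ?thesis using mem_lead_coeffs by auto
next
  case False
  then obtain u c where u: "u \<in> V" "lead_rep F t (u * b) c min_deg" "c min_deg = l"
    using assms(1) mem_lead_coeffs by meson
  then obtain g where "lead_rep F t (act p u * b) g min_deg" "g min_deg = l * p"
    using act_lead_rep assms(2) False by blast
  then show ?thesis using act_mem u(1) assms(2) mem_lead_coeffs by blast
qed

lemma lead_coeffs_right_ideal: "right_ideal K_d.poly_ring lead_coeffs"
  unfolding right_ideal_def P_eq[symmetric]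
  using lead_coeffs_subset_P lead_coeffs_add lead_coeffs_mult by (auto simp: lead_coeffs_def)

lemma lead_coeffs_nontrivial: "lead_coeffs \<noteq> {0}"
proof -
  obtain u where "u \<in> V" "u \<noteq> 0" "poly_deg F t (u * b) = min_deg"
    using min_deg_attained by blast
  then obtain c where "lead_rep F t (u * b) c min_deg" using lead_rep_mult_b by metis
  then have "c min_deg \<in> lead_coeffs" "c min_deg \<noteq> 0"
    using \<open>u \<in> V\<close> unfolding lead_coeffs_def lead_rep_def by auto
  then show ?thesis by blast
qed

lemma act_mem_min_deg_part:
  assumes "f \<in> V" "lead_rep F t (f * b) c min_deg" "p \<in> P"
  shows "act p f \<in> min_deg_part K t d V"
proof (cases "p = 0")
  case True
  then show ?thesis using act_scalar K_closed(1) min_deg_part_eq by simp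
next
  case False
  then obtain g where "lead_rep F t (act p f * b) g min_deg"
    using act_lead_rep assms by blast
  then show ?thesis using act_mem assms F_t.poly_deg_eq F_t.lead_rep_neq_0 min_deg_part_eq
    by force
qed

lemma min_deg_part_eq_generated:
  assumes f: "f \<in> V" "lead_rep F t (f * b) cf min_deg"
    and gen: "lead_coeffs = {cf min_deg * p | p. p \<in> P}"
  shows "min_deg_part K t d V = {act p f | p. p \<in> P}"
proof (intro equalityI subsetI)
  fix u assume "u \<in> min_deg_part K t d V"
  then consider "u = 0" | "u \<in> V" "u \<noteq> 0" "poly_deg F t (u * b) = min_deg"
    using min_deg_part_eq by blast
  then show "u \<in> {act p f | p. p \<in> P}"
  proof cases
    case 1
    then show ?thesis using act_scalar[OF K_closed(1)] P_closed(1) by force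
  next
    case 2
    then obtain c where c: "lead_rep F t (u * b) c min_deg" using lead_rep_mult_b by metis
    then have "c min_deg \<in> lead_coeffs" using 2 unfolding lead_coeffs_def by blast
    then obtain q where q: "q \<in> P" "c min_deg = cf min_deg * q" using gen by blast
    then have "q \<noteq> 0" using c unfolding lead_rep_def by auto
    then obtain g where g: "lead_rep F t (act q f * b) g min_deg" "g min_deg = c min_deg"
      using act_lead_rep[OF f(2) q(1)] q(2) by auto
    have "(u - act q f) * b = 0 \<or> poly_deg F t ((u - act q f) * b) < min_deg"
      using F_t.lead_rep_diff[OF c g(1)] g(2) by (simp add: left_diff_distrib)
    moreover have "u - act q f \<in> V" using diff_mem 2(1) act_mem f(1) q(1) by blast
    ultimately have "u = act q f" using min_deg_le by (metis mult_b_neq_0 not_le right_minus_eq)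
    then show ?thesis using q(1) by blast
  qed
qed (use act_mem_min_deg_part f in blast)

lemma min_deg_part_generator_unique:
  assumes f: "lead_rep F t (f * b) cf min_deg" "min_deg_part K t d V = {act p f | p. p \<in> P}"
    and g: "min_deg_part K t d V = {act p g | p. p \<in> P}"
  shows "\<exists>c\<in>K. c \<noteq> 0 \<and> g = c * f"
proof -
  have "act 1 u = u" for u using act_scalar[OF K_closed(2)] by simp
  then have "u \<in> {act p u | p. p \<in> P}" for u using P_closed(2) by (metis (mono_tags, lifting) mem_Collect_eq)
  then obtain p q where p: "p \<in> P" "f = act p g" and q: "q \<in> P" "g = act q f"
    using f(2) g by blast
  have pq: "q * p \<in> P" using p q P_closed(4) by blast
  have f_eq: "act (q * p) f = f" using p q act_act by simp
  have "f \<noteq> 0" using f(1) F_t.lead_rep_neq_0 by force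
  then have "q * p \<noteq> 0" using f_eq act_scalar[OF K_closed(1)] by auto
  then obtain h where "lead_rep F t (f * b) h min_deg" "h min_deg = cf min_deg * (q * p)"
    using act_lead_rep[OF f(1) pq] f_eq by auto
  then have "cf min_deg * (q * p) = cf min_deg * 1"
    using F_t.poly_rep_unique f(1) unfolding lead_rep_def by fastforce
  then have "q * p = 1" using f(1) unfolding lead_rep_def by simp
  then have "q \<in> K" using K_d.unit_mem p q unfolding P_eq by blast
  moreover have "q \<noteq> 0" using \<open>q * p = 1\<close> by auto
  ultimately show ?thesis using q(2) act_scalar by blast
qed

theorem min_deg_part_cyclic:
  "\<exists>f\<in>V. min_deg_part K t d V = {act p f | p. p \<in> P} \<and>
     (\<forall>g\<in>V. min_deg_part K t d V = {act p g | p. p \<in> P} \<longrightarrow> (\<exists>c\<in>K. c \<noteq> 0 \<and> g = c * f))"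
proof -
  obtain l where l: "l \<in> lead_coeffs" "l \<noteq> 0" "lead_coeffs = {l * p | p. p \<in> P}"
    using K_d.right_ideal_principal[OF lead_coeffs_right_ideal lead_coeffs_nontrivial]
    unfolding P_eq by blast
  then obtain f cf where f: "f \<in> V" "lead_rep F t (f * b) cf min_deg" "cf min_deg = l"
    unfolding lead_coeffs_def by blast
  then have "min_deg_part K t d V = {act p f | p. p \<in> P}"
    using min_deg_part_eq_generated l(3) by simp
  then show ?thesis using f min_deg_part_generator_unique by blast
qed

end

context weyl_setting
begin

lemma right_ideal_min_deg_part:
  assumes "right_ideal W I" "I \<noteq> {0}"
  shows "\<exists>f\<in>I. min_deg_part K t d I = {f * p | p. p \<in> P} \<and>
    (\<forall>g\<in>I. min_deg_part K t d I = {g * p | p. p \<in> P} \<longrightarrow> (\<exists>c\<in>K. c \<noteq> 0 \<and> g = c * f))"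
proof -
  have I: "I \<subseteq> W" "0 \<in> I" "\<And>x y. x \<in> I \<Longrightarrow> y \<in> I \<Longrightarrow> x + y \<in> I"
      "\<And>x a. x \<in> I \<Longrightarrow> a \<in> W \<Longrightarrow> x * a \<in> I"
    using assms(1) unfolding right_ideal_def by auto
  interpret lead_coeff_module K t d I 1 "\<lambda>p x. x * p"
  proof
    show "x - y \<in> I" if "x \<in> I" "y \<in> I" for x y
      using I(3)[OF that(1) I(4)[OF that(2) W_closed(2)[OF W_closed(1)]]] by simp
    show "\<exists>g. lead_rep F t (x * p * 1) g n \<and> g n = c n * p"
      if "lead_rep F t (x * 1) c n" "p \<in> P" "p \<noteq> 0" for x c n p
      using F_t.lead_rep_mult_const_right that P_subset_F by auto
    show "x * k = k * x" if "k \<in> K" for x k using K_central[OF that] by simp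
  qed (use assms(2) I P_subset_W W_closed in \<open>auto simp: mult.assoc\<close>)
  show ?thesis using min_deg_part_cyclic by simp
qed

lemma dual_ideal_min_deg_part:
  assumes "right_ideal W I" "I \<noteq> {0}"
  shows "\<exists>e\<in>dual_ideal K t d I. min_deg_part K t d (dual_ideal K t d I) = {p * e | p. p \<in> P} \<and>
    (\<forall>g\<in>dual_ideal K t d I. min_deg_part K t d (dual_ideal K t d I) = {p * g | p. p \<in> P} \<longrightarrow>
      (\<exists>c\<in>K. c \<noteq> 0 \<and> g = c * e))"
proof -
  have IW: "I \<subseteq> W" using assms(1) unfolding right_ideal_def by auto
  obtain f0 where f0: "f0 \<in> I" "f0 \<noteq> 0"
    using assms unfolding right_ideal_def by blast
  interpret lead_coeff_module K t d "dual_ideal K t d I" f0 "\<lambda>p u. p * u"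
  proof
    have "1 \<in> dual_ideal K t d I" using Q_closed(1) IW unfolding dual_ideal_def by auto
    then show "\<exists>u\<in>dual_ideal K t d I. u \<noteq> 0" using one_neq_zero by blast
    show "\<exists>g. lead_rep F t (p * u * f0) g n \<and> g n = c n * p"
      if "lead_rep F t (u * f0) c n" "p \<in> P" "p \<noteq> 0" for u c n p
    proof -
      have "c n \<in> F" "p \<in> F" using that P_subset_F unfolding lead_rep_def poly_rep_def by auto
      then show ?thesis using F_t.lead_rep_mult_const_left that F_commute P_subset_F
        by (auto simp: mult.assoc)
    qed
    show "p * (q * u) = q * p * u" if "p \<in> P" "q \<in> P" for p q u
      using F_commute that P_subset_F by (metis mult.assoc subsetD)
  qed (use f0 IW P_subset_W W_subset_Q Q_closed W_closed in
      \<open>auto simp: dual_ideal_def distrib_right left_diff_distrib mult.assoc\<close>)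
  show ?thesis using min_deg_part_cyclic by simp
qed

end

theorem corollary2:
  fixes K :: "'a::division_ring set" and t d :: 'a and I :: "'a set"
  assumes "central_subfield K"
    and "\<forall>n::nat. n > 0 \<longrightarrow> (of_nat n :: 'a) \<noteq> 0"
    and "d * t - t * d = 1"
    and "right_ideal (Weyl K t d) I" and "I \<noteq> {0}"
  shows "(\<exists>f\<in>I. min_deg_part K t d I = {f * p | p. p \<in> Kpoly_d K d} \<and>
            (\<forall>g\<in>I. min_deg_part K t d I = {g * p | p. p \<in> Kpoly_d K d} \<longrightarrow>
                     (\<exists>c\<in>K. c \<noteq> 0 \<and> g = c * f)))
       \<and> (\<exists>e\<in>dual_ideal K t d I.
            min_deg_part K t d (dual_ideal K t d I) = {p * e | p. p \<in> Kpoly_d K d} \<and>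
            (\<forall>g\<in>dual_ideal K t d I.
                min_deg_part K t d (dual_ideal K t d I) = {p * g | p. p \<in> Kpoly_d K d} \<longrightarrow>
                (\<exists>c\<in>K. c \<noteq> 0 \<and> g = c * e)))"
proof -
  interpret weyl_setting K t d using assms(1-3) by unfold_locales
  show ?thesis
    using right_ideal_min_deg_part[OF assms(4,5)] dual_ideal_min_deg_part[OF assms(4,5)] by blast
qed

end
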